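(* For all $m,n\in\mathbb{Z}$, with signs $\pm$ (depending on $m,n$ and the equation), $$X_{2m-n}S_{\lambda(m,n)}=\pm S_{\lambda(m+1,n)},\quad X_{2n-m}S_{\lambda(m+1,n)}=\pm S_{\lambda(m+1,n+1)},\quad X_{-m-n}S_{\lambda(m+1,n+1)}=\pm S_{\lambda(m,n)},$$ and $$X_{2n-m+1}S_{\lambda(m,n)}=\pm S_{\lambda(m,n+1)},\quad X_{2m-n-1}S_{\lambda(m,n+1)}=\pm S_{\lambda(m+1,n+1)},\quad X_{-m-n}S_{\lambda(m+1,n+1)}=\pm S_{\lambda(m,n)}.$$
   Context: Schur functions: for a partition $\lambda$ of length $l(\lambda)$, $S_\lambda(t)=\det(p_{\lambda_i-i+j}(t))_{1\le i,j\le l(\lambda)}$ in $t=(t_1,t_2,\ldots)$, where $\sum_{n\ge0}p_n(t)z^n=\exp(\sum_{k\ge1}t_kz^k)$, $p_n=0$ for $n<0$. Vertex operators $X_m$ ($m\in\mathbb{Z}$) acting on $\mathbb{C}[t_1,t_2,\ldots]$ are defined by $\sum_{m\in\mathbb{Z}}X_mz^m=\exp(\sum_{k\ge1}t_kz^k)\exp(-\sum_{k\ge1}\frac{z^{-k}}{k}\partial_{t_k})$. A Maya diagram is $M\subset\mathbb{Z}$ containing all sufficiently negative and no sufficiently large integers; writing $M=\{\cdots<m_3<m_2<m_1\}$, its partition is defined by $m_i-m_{i+1}=\lambda_i-\lambda_{i+1}+1$. With $D_l=\{k\in\mathbb{Z}:k<l\}$, $\lambda(m,n)$ is the partition of $M(m,n)=3D_m\cup(3D_n+1)\cup(3D_0+2)$.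 *)

theory Defs
  imports Complex_Main "HOL-Computational_Algebra.Formal_Power_Series"
    "HOL-Computational_Algebra.Polynomial"
    "Jordan_Normal_Form.Determinant"
begin

text \<open>Variables t = (t_1, t_2, ...) are modelled as t :: nat => complex, where
  t k is t_k for k >= 1 (the value t 0 is ignored).  Elements of C[t_1,t_2,...]
  are modelled by the polynomial functions they define.\<close>

type_synonym tfun = "(nat \<Rightarrow> complex) \<Rightarrow> complex"

definition tseries :: "(nat \<Rightarrow> complex) \<Rightarrow> complex fps" where
  "tseries t = Abs_fps (\<lambda>k. if k = 0 then 0 else t k)"

definition hp :: "int \<Rightarrow> tfun" where
  "hp n t = (if n < 0 then 0 else fps_nth (fps_exp 1 oo tseries t) (nat n))"

text \<open>Partitions as weakly decreasing lists of positive naturals;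
  part lam i is the (i+1)-th part (0 beyond the length).\<close>
definition is_partition :: "nat list \<Rightarrow> bool" where
  "is_partition lam \<longleftrightarrow> sorted_wrt (\<ge>) lam \<and> (\<forall>x\<in>set lam. 0 < x)"

definition part :: "nat list \<Rightarrow> nat \<Rightarrow> nat" where
  "part lam i = (if i < length lam then lam ! i else 0)"

definition schur :: "nat list \<Rightarrow> tfun" where
  "schur lam t = det (mat (length lam) (length lam)
       (\<lambda>(i, j). hp (int (lam ! i) - int i + int j) t))"

text \<open>Vertex operators: X(z) f = exp(sum t_k z^k) f(t - [z^{-1}]),
  where exp(-sum z^{-k}/k d/dt_k) acts as the shift t_k -> t_k - z^{-k}/k.
  Writing f(t - [w]) = sum_j c_j(t) w^j, the coefficient of z^m is
  X_m f = sum_{j>=0} p_{m+j}(t) c_j(t).\<close>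
definition tshift :: "(nat \<Rightarrow> complex) \<Rightarrow> complex \<Rightarrow> (nat \<Rightarrow> complex)" where
  "tshift t w = (\<lambda>k. if k = 0 then t 0 else t k - w ^ k / of_nat k)"

definition shift_poly :: "tfun \<Rightarrow> (nat \<Rightarrow> complex) \<Rightarrow> complex poly" where
  "shift_poly f t = (THE q. \<forall>w. poly q w = f (tshift t w))"

definition shift_coeff :: "tfun \<Rightarrow> nat \<Rightarrow> tfun" where
  "shift_coeff f j t = coeff (shift_poly f t) j"

definition vertexX :: "int \<Rightarrow> tfun \<Rightarrow> tfun" where
  "vertexX m f t = (\<Sum>j\<le>degree (shift_poly f t). hp (m + int j) t * shift_coeff f j t)"

text \<open>Maya diagrams: maya_seq M i is m_{i+1}, the (i+1)-th largest element.\<close>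
definition is_maya :: "int set \<Rightarrow> bool" where
  "is_maya M \<longleftrightarrow> (\<exists>a. \<forall>k<a. k \<in> M) \<and> (\<exists>b. \<forall>k\<in>M. k < b)"

fun maya_seq :: "int set \<Rightarrow> nat \<Rightarrow> int" where
  "maya_seq M 0 = Sup M"
| "maya_seq M (Suc i) = Sup {x \<in> M. x < maya_seq M i}"

definition maya_partition :: "int set \<Rightarrow> nat list" where
  "maya_partition M = (THE lam. is_partition lam \<and>
     (\<forall>i. maya_seq M i - maya_seq M (Suc i) = int (part lam i) - int (part lam (Suc i)) + 1))"

definition Dl :: "int \<Rightarrow> int set" where
  "Dl l = {k. k < l}"

definition Mmn :: "int \<Rightarrow> int \<Rightarrow> int set" where
  "Mmn m n = ((\<lambda>k. 3 * k) ` Dl m) \<union> ((\<lambda>k. 3 * k + 1) ` Dl n) \<union> ((\<lambda>k. 3 * k + 2) ` Dl 0)"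

definition lam_mn :: "int \<Rightarrow> int \<Rightarrow> nat list" where
  "lam_mn m n = maya_partition (Mmn m n)"

end

theory Submission
  imports Defs
begin

text \<open>Since exp(-\<Sum> w^k z^k / k) = 1 - w z, the Miwa shift t \<mapsto> t - [w] sends p_n to
  p_n - w p_{n-1}. Hence for D(e) = det(p_{e_i + j}) the function D(e)(t - [w]) is a bordered
  determinant with first row (w^j), a polynomial in w whose coefficients are the first-row cofactors,
  and the vertex operator replaces w^j by p_{k+j}: X_k D(e) = D(k, e_1 - 1, e_2 - 1, ...).
  The Schur function of a Maya diagram M of charge c (that is, m_{i+1} + i = c for large i) is
  D(m_1 - c, m_2 - c, ...), padded by rows that do not change it; with k = x - c - 1 the rows of X_k S_M are those of M \<union> {x}, of charge c + 1,
  except that the new row stands first. Moving it into place costs a sign. The six identities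
  add 3m, 3n + 1 or 2 to M(m,n); in the last case M(m+1,n+1) \<union> {2} = M(m,n) + 3 has the
  partition of M(m,n).\<close>

section \<open>The Miwa shift\<close>

lemma fps_linear_ODE_unique:
  fixes F H D :: "'a::field_char_0 fps"
  assumes "fps_deriv F = D * F" "fps_deriv H = D * H" "fps_nth F 0 = fps_nth H 0"
  shows "F = H"
proof -
  have "\<forall>k\<le>n. fps_nth F k = fps_nth H k" for n
  proof (induction n)
    case 0
    then show ?case using assms(3) by simp
  next
    case (Suc n)
    have "of_nat (n + 1) * fps_nth F (n + 1) = fps_nth (D * F) n"
      using assms(1) fps_deriv_nth[of F n] by simp
    also have "\<dots> = (\<Sum>i=0..n. fps_nth D i * fps_nth F (n - i))"
      by (simp add: fps_mult_nth)
    also have "\<dots> = (\<Sum>i=0..n. fps_nth D i * fps_nth H (n - i))"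
      using Suc.IH by (intro sum.cong) auto
    also have "\<dots> = fps_nth (D * H) n"
      by (simp add: fps_mult_nth)
    also have "\<dots> = of_nat (n + 1) * fps_nth H (n + 1)"
      using assms(2) fps_deriv_nth[of H n] by simp
    finally have "fps_nth F (Suc n) = fps_nth H (Suc n)"
      by (simp del: of_nat_Suc)
    then show ?case using Suc.IH le_Suc_eq by auto
  qed
  then show ?thesis by (auto simp: fps_eq_iff)
qed

lemma fps_deriv_exp_compose:
  fixes A :: "'a::field_char_0 fps"
  assumes "fps_nth A 0 = 0"
  shows "fps_deriv (fps_exp 1 oo A) = fps_deriv A * (fps_exp 1 oo A)"
  using assms by (simp add: fps_compose_deriv fps_compose_mult_distrib mult.commute)

text \<open>The series -log(1 - w X); tshift t w is the Miwa shift t - [w].\<close>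
definition miwa_series :: "'a::field \<Rightarrow> 'a fps" where
  "miwa_series w = Abs_fps (\<lambda>k. if k = 0 then 0 else w ^ k / of_nat k)"

lemma tseries_tshift: "tseries (tshift t w) = tseries t - miwa_series w"
  by (auto simp: tseries_def tshift_def miwa_series_def fps_eq_iff)

lemma fps_deriv_miwa_series:
  "fps_deriv (miwa_series (w::'a::field_char_0)) = Abs_fps (\<lambda>n. w ^ (n + 1))"
  by (auto simp: miwa_series_def fps_eq_iff simp del: of_nat_Suc)

lemma fps_deriv_miwa_series_mult:
  "fps_deriv (miwa_series w) * (1 - fps_const w * fps_X) = fps_const (w::'a::field_char_0)"
proof -
  have "Q * (1 - fps_const w * fps_X) = Q - fps_const w * (fps_X * Q)" for Q :: "'a fps"
    by (simp add: algebra_simps)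
  then show ?thesis
    by (auto simp: fps_deriv_miwa_series fps_eq_iff power_eq_if)
qed

lemma fps_exp_tseries_tshift:
  "fps_exp 1 oo tseries (tshift t w) = (fps_exp 1 oo tseries t) * (1 - fps_const w * fps_X)"
proof (rule fps_linear_ODE_unique)
  let ?E = "fps_exp 1 oo tseries t"
  have t0: "fps_nth (tseries t) 0 = 0" "fps_nth (tseries (tshift t w)) 0 = 0"
    by (auto simp: tseries_def)
  show "fps_deriv (fps_exp 1 oo tseries (tshift t w))
      = fps_deriv (tseries (tshift t w)) * (fps_exp 1 oo tseries (tshift t w))"
    by (rule fps_deriv_exp_compose[OF t0(2)])
  have "fps_deriv (?E * (1 - fps_const w * fps_X))
      = fps_deriv (tseries t) * ?E * (1 - fps_const w * fps_X) - ?E * fps_const w"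
    using fps_deriv_exp_compose[OF t0(1)] by (simp add: algebra_simps)
  also have "\<dots> = fps_deriv (tseries t) * ?E * (1 - fps_const w * fps_X)
      - ?E * (fps_deriv (miwa_series w) * (1 - fps_const w * fps_X))"
    by (simp add: fps_deriv_miwa_series_mult)
  also have "\<dots> = fps_deriv (tseries (tshift t w)) * (?E * (1 - fps_const w * fps_X))"
    by (simp add: tseries_tshift algebra_simps)
  finally show "fps_deriv (?E * (1 - fps_const w * fps_X))
      = fps_deriv (tseries (tshift t w)) * (?E * (1 - fps_const w * fps_X))" .
qed simp

lemma hp_tshift: "hp n (tshift t w) = hp n t - w * hp (n - 1) t"
proof -
  let ?E = "fps_exp 1 oo tseries t"
  have "fps_nth (?E * (1 - fps_const w * fps_X)) k
      = fps_nth ?E k - w * (if k = 0 then 0 else fps_nth ?E (k - 1))" for k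
  proof -
    have "?E * (1 - fps_const w * fps_X) = ?E - fps_const w * (fps_X * ?E)"
      by (simp add: algebra_simps)
    then show ?thesis by (simp only:) simp
  qed
  then show ?thesis
    unfolding hp_def fps_exp_tseries_tshift by (auto simp: nat_diff_distrib')
qed

lemma hp_neg: "n < 0 \<Longrightarrow> hp n t = 0"
  by (simp add: hp_def)

lemma hp_0: "hp 0 t = 1"
  by (simp add: hp_def)

section \<open>Jacobi--Trudi determinants\<close>

definition jt_mat :: "int list \<Rightarrow> (nat \<Rightarrow> complex) \<Rightarrow> complex mat" where
  "jt_mat e t = mat (length e) (length e) (\<lambda>(i, j). hp (e ! i + int j) t)"

definition jt_det :: "int list \<Rightarrow> tfun" where
  "jt_det e t = det (jt_mat e t)"

lemma jt_mat_carrier: "jt_mat e t \<in> carrier_mat (length e) (length e)"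
  by (simp add: jt_mat_def)

text \<open>A last row with e = -N is (0, ..., 0, 1), so it does not change the determinant.\<close>
lemma jt_det_snoc: "jt_det (e @ [- int (length e)]) = jt_det e"
proof
  fix t
  let ?N = "length e"
  let ?A = "jt_mat (e @ [- int ?N]) t"
  have A: "?A \<in> carrier_mat (Suc ?N) (Suc ?N)"
    using jt_mat_carrier[of "e @ [- int ?N]" t] by simp
  have "det ?A = (\<Sum>j<Suc ?N. ?A $$ (?N, j) * cofactor ?A ?N j)"
    by (rule laplace_expansion_row[OF A]) simp
  also have "\<dots> = (\<Sum>j<Suc ?N. if j = ?N then cofactor ?A ?N j else 0)"
  proof (intro sum.cong refl)
    fix j assume "j \<in> {..<Suc ?N}"
    then have "?A $$ (?N, j) = (if j = ?N then 1 else 0)"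
      by (auto simp: jt_mat_def nth_append hp_neg hp_0)
    then show "?A $$ (?N, j) * cofactor ?A ?N j = (if j = ?N then cofactor ?A ?N j else 0)"
      by simp
  qed
  also have "\<dots> = det (mat_delete ?A ?N ?N)"
    by (simp add: cofactor_def)
  also have "mat_delete ?A ?N ?N = jt_mat e t"
    by (rule eq_matI) (auto simp: mat_delete_def jt_mat_def nth_append)
  finally show "jt_det (e @ [- int ?N]) t = jt_det e t"
    by (simp add: jt_det_def)
qed

lemma jt_det_swap: "jt_det (xs @ b # a # ys) t = - jt_det (xs @ a # b # ys) t"
proof -
  let ?A = "jt_mat (xs @ a # b # ys) t"
  have "jt_mat (xs @ b # a # ys) t = swaprows (length xs) (Suc (length xs)) ?A"
    by (rule eq_matI) (auto simp: jt_mat_def nth_append nth_Cons' split: if_splits)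
  then show ?thesis
    using det_swaprows[of "length xs" "length (xs @ a # b # ys)" "Suc (length xs)" ?A]
      jt_mat_carrier[of "xs @ a # b # ys" t]
    by (simp add: jt_det_def)
qed

lemma jt_det_move: "jt_det (pre @ x # xs @ ys) t = (-1) ^ length xs * jt_det (pre @ xs @ x # ys) t"
proof (induction xs arbitrary: pre)
  case Nil
  then show ?case by simp
next
  case (Cons y xs)
  have "jt_det (pre @ x # (y # xs) @ ys) t = - jt_det ((pre @ [y]) @ x # xs @ ys) t"
    using jt_det_swap[of pre x y "xs @ ys"] by simp
  also have "\<dots> = - ((-1) ^ length xs * jt_det ((pre @ [y]) @ xs @ x # ys) t)"
    by (simp only: Cons.IH)
  finally show ?case by simp
qed

lemma schur_eq_jt_det:
  assumes "length lam \<le> N"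
  shows "schur lam = jt_det (map (\<lambda>i. int (part lam i) - int i) [0..<N])"
  using assms
proof (induction N rule: dec_induct)
  case base
  show ?case
    unfolding schur_def jt_det_def jt_mat_def
    by (intro ext arg_cong[where f = det] cong_mat) (auto simp: part_def)
next
  case (step N)
  then have "map (\<lambda>i. int (part lam i) - int i) [0..<Suc N]
      = map (\<lambda>i. int (part lam i) - int i) [0..<N] @ [- int N]"
    by (simp add: part_def)
  then show ?case
    using step.IH jt_det_snoc[of "map (\<lambda>i. int (part lam i) - int i) [0..<N]"] by simp
qed

definition col_shift_mat :: "nat \<Rightarrow> 'a::comm_ring_1 \<Rightarrow> 'a mat" where
  "col_shift_mat n w = mat n n (\<lambda>(i, j). if i = j then 1 else if Suc i = j then - w else 0)"

lemma col_shift_mat_carrier: "col_shift_mat n w \<in> carrier_mat n n"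
  by (simp add: col_shift_mat_def)

lemma det_col_shift_mat: "det (col_shift_mat n w) = 1"
proof -
  have "det (col_shift_mat n w) = prod_list (diag_mat (col_shift_mat n w))"
    by (rule det_upper_triangular[OF _ col_shift_mat_carrier])
      (auto simp: upper_triangular_def col_shift_mat_def)
  also have "\<dots> = (\<Prod>i = 0..<n. col_shift_mat n w $$ (i, i))"
    using prod_list_diag_prod[of "col_shift_mat n w"] by (simp add: col_shift_mat_def)
  also have "\<dots> = 1"
    by (intro prod.neutral) (auto simp: col_shift_mat_def)
  finally show ?thesis .
qed

lemma mult_col_shift_mat_index:
  assumes "A \<in> carrier_mat k n" "i < k" "j < n"
  shows "(A * col_shift_mat n w) $$ (i, j) = A $$ (i, j) - (if j = 0 then 0 else w * A $$ (i, j - 1))"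
proof -
  have "(A * col_shift_mat n w) $$ (i, j) = (\<Sum>l = 0..<n. A $$ (i, l) * col_shift_mat n w $$ (l, j))"
    using assms by (simp add: scalar_prod_def col_shift_mat_def)
  also have "\<dots> = (\<Sum>l = 0..<n. (if l = j then A $$ (i, l) else 0)
                   + (if Suc l = j then - w * A $$ (i, l) else 0))"
    using assms(3) by (intro sum.cong refl) (auto simp: col_shift_mat_def)
  also have "\<dots> = A $$ (i, j) - (if j = 0 then 0 else w * A $$ (i, j - 1))"
    using assms(3) by (cases j) (auto simp: sum.distrib)
  finally show ?thesis .
qed

definition bordered_jt_mat :: "(nat \<Rightarrow> complex) \<Rightarrow> int list \<Rightarrow> (nat \<Rightarrow> complex) \<Rightarrow> complex mat" where
  "bordered_jt_mat r e t = mat (Suc (length e)) (Suc (length e))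
     (\<lambda>(i, j). if i = 0 then r j else hp (e ! (i - 1) - 1 + int j) t)"

definition border_cofactor :: "int list \<Rightarrow> nat \<Rightarrow> tfun" where
  "border_cofactor e j t = cofactor (bordered_jt_mat (\<lambda>_. 0) e t) 0 j"

lemma bordered_jt_mat_carrier: "bordered_jt_mat r e t \<in> carrier_mat (Suc (length e)) (Suc (length e))"
  by (simp add: bordered_jt_mat_def)

lemma det_bordered_jt_mat:
  "det (bordered_jt_mat r e t) = (\<Sum>j<Suc (length e). r j * border_cofactor e j t)"
proof -
  let ?B = "bordered_jt_mat r e t"
  have "det ?B = (\<Sum>j<Suc (length e). ?B $$ (0, j) * cofactor ?B 0 j)"
    by (rule laplace_expansion_row[OF bordered_jt_mat_carrier]) simp
  also have "\<dots> = (\<Sum>j<Suc (length e). r j * border_cofactor e j t)"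
  proof (intro sum.cong refl)
    fix j assume "j \<in> {..<Suc (length e)}"
    moreover have "mat_delete ?B 0 j = mat_delete (bordered_jt_mat (\<lambda>_. 0) e t) 0 j"
      unfolding mat_delete_def by (rule cong_mat) (auto simp: bordered_jt_mat_def)
    ultimately show "?B $$ (0, j) * cofactor ?B 0 j = r j * border_cofactor e j t"
      by (simp add: border_cofactor_def cofactor_def bordered_jt_mat_def)
  qed
  finally show ?thesis .
qed

text \<open>Subtracting w times each column from the next one clears the first row (w^j)
  and, by hp_tshift, turns the remaining rows into those of the shifted determinant.\<close>
lemma det_bordered_jt_mat_powers:
  "det (bordered_jt_mat (\<lambda>j. w ^ j) e t) = jt_det e (tshift t w)"
proof -
  let ?n = "Suc (length e)"
  let ?B = "bordered_jt_mat (\<lambda>j. w ^ j) e t"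
  let ?C = "?B * col_shift_mat ?n w"
  have C: "?C \<in> carrier_mat ?n ?n"
    using bordered_jt_mat_carrier col_shift_mat_carrier by (rule mult_carrier_mat)
  have C_index: "?C $$ (i, j) = ?B $$ (i, j) - (if j = 0 then 0 else w * ?B $$ (i, j - 1))"
    if "i < ?n" "j < ?n" for i j
    by (rule mult_col_shift_mat_index[OF bordered_jt_mat_carrier that])
  have "det ?B = det ?C"
    by (simp add: det_mult[OF bordered_jt_mat_carrier col_shift_mat_carrier] det_col_shift_mat)
  also have "\<dots> = (\<Sum>j<?n. ?C $$ (0, j) * cofactor ?C 0 j)"
    by (rule laplace_expansion_row[OF C]) simp
  also have "\<dots> = (\<Sum>j<?n. if j = 0 then cofactor ?C 0 j else 0)"
  proof (intro sum.cong refl)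
    fix j assume "j \<in> {..<?n}"
    then have "?C $$ (0, j) = (if j = 0 then 1 else 0)"
      by (subst C_index) (auto simp: bordered_jt_mat_def power_eq_if)
    then show "?C $$ (0, j) * cofactor ?C 0 j = (if j = 0 then cofactor ?C 0 j else 0)"
      by simp
  qed
  also have "\<dots> = det (mat_delete ?C 0 0)"
    by (simp add: cofactor_def)
  also have "mat_delete ?C 0 0 = jt_mat e (tshift t w)"
  proof (rule eq_matI)
    fix i j assume "i < dim_row (jt_mat e (tshift t w))" "j < dim_col (jt_mat e (tshift t w))"
    then have ij: "i < length e" "j < length e"
      by (auto simp: jt_mat_def)
    then have "mat_delete ?C 0 0 $$ (i, j) = ?C $$ (Suc i, Suc j)"
      by (simp add: mat_delete_def bordered_jt_mat_def col_shift_mat_def)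
    also have "\<dots> = hp (e ! i + int j) t - w * hp (e ! i + int j - 1) t"
      using ij by (subst C_index) (auto simp: bordered_jt_mat_def algebra_simps)
    also have "\<dots> = jt_mat e (tshift t w) $$ (i, j)"
      using ij by (simp add: jt_mat_def hp_tshift)
    finally show "mat_delete ?C 0 0 $$ (i, j) = jt_mat e (tshift t w) $$ (i, j)" .
  qed (use C in \<open>auto simp: jt_mat_def\<close>)
  finally show ?thesis
    by (simp add: jt_det_def)
qed

lemma shift_poly_jt_det:
  "shift_poly (jt_det e) t = (\<Sum>j<Suc (length e). monom (border_cofactor e j t) j)"
proof -
  let ?q = "\<Sum>j<Suc (length e). monom (border_cofactor e j t) j"
  have q: "poly ?q w = jt_det e (tshift t w)" for w
    by (simp add: poly_sum poly_monom det_bordered_jt_mat_powers[symmetric] det_bordered_jt_mat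
        mult.commute)
  show ?thesis
    unfolding shift_poly_def
  proof (rule the_equality)
    fix q' assume "\<forall>w. poly q' w = jt_det e (tshift t w)"
    then have "poly q' = poly ?q"
      using q by auto
    then show "q' = ?q"
      by (simp add: poly_eq_poly_eq_iff)
  qed (use q in auto)
qed

lemma vertexX_jt_det: "vertexX k (jt_det e) = jt_det (k # map (\<lambda>x. x - 1) e)"
proof
  fix t
  let ?q = "\<Sum>j<Suc (length e). monom (border_cofactor e j t) j"
  have coeff_q: "coeff ?q j = (if j < Suc (length e) then border_cofactor e j t else 0)" for j
    by (simp only: coeff_sum coeff_monom sum.delta finite_lessThan lessThan_iff)
  have degree_q: "degree ?q \<le> length e"
    by (intro degree_le allI impI, subst coeff_q) simp
  have "vertexX k (jt_det e) t = (\<Sum>j\<le>degree ?q. hp (k + int j) t * coeff ?q j)"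
    by (simp add: vertexX_def shift_coeff_def shift_poly_jt_det)
  also have "\<dots> = (\<Sum>j<Suc (length e). hp (k + int j) t * coeff ?q j)"
  proof (rule sum.mono_neutral_left)
    show "\<forall>i\<in>{..<Suc (length e)} - {..degree ?q}. hp (k + int i) t * coeff ?q i = 0"
      by (auto simp del: sum.lessThan_Suc intro: coeff_eq_0)
  qed (use degree_q in auto)
  also have "\<dots> = (\<Sum>j<Suc (length e). hp (k + int j) t * border_cofactor e j t)"
    by (intro sum.cong refl, subst coeff_q) simp
  also have "\<dots> = det (bordered_jt_mat (\<lambda>j. hp (k + int j) t) e t)"
    by (simp add: det_bordered_jt_mat)
  also have "bordered_jt_mat (\<lambda>j. hp (k + int j) t) e t = jt_mat (k # map (\<lambda>x. x - 1) e) t"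
    by (rule eq_matI) (auto simp: bordered_jt_mat_def jt_mat_def nth_Cons' algebra_simps)
  also have "det (jt_mat (k # map (\<lambda>x. x - 1) e) t) = jt_det (k # map (\<lambda>x. x - 1) e) t"
    by (simp add: jt_det_def)
  finally show "vertexX k (jt_det e) t = jt_det (k # map (\<lambda>x. x - 1) e) t" .
qed

section \<open>Maya diagrams\<close>

lemma Sup_int_mem:
  fixes X :: "int set"
  assumes "X \<noteq> {}" "bdd_above X"
  shows "Sup X \<in> X"
proof (rule ccontr)
  assume "Sup X \<notin> X"
  then have "y \<le> Sup X - 1" if "y \<in> X" for y
    using cSup_upper[OF that assms(2)] that by (cases "y = Sup X") auto
  then have "Sup X \<le> Sup X - 1"
    using assms(1) by (rule cSup_least[rotated])
  then show False by simp
qed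

definition count_above :: "int set \<Rightarrow> int \<Rightarrow> nat" where
  "count_above M x = card {y \<in> M. x < y}"

lemma maya_finite_above:
  assumes "is_maya M" shows "finite {y \<in> M. x < y}"
proof -
  obtain b where "\<forall>k\<in>M. k < b"
    using assms unfolding is_maya_def by blast
  then have "{y \<in> M. x < y} \<subseteq> {x<..<b}" by auto
  then show ?thesis by (rule finite_subset) simp
qed

lemma maya_bdd_above:
  assumes "is_maya M" shows "bdd_above {y \<in> M. P y}"
proof -
  obtain b where "\<forall>k\<in>M. k < b"
    using assms unfolding is_maya_def by blast
  then show ?thesis by (intro bdd_aboveI[of _ b]) auto
qed

lemma maya_ex_less: "is_maya M \<Longrightarrow> \<exists>k\<in>M. k < x"
  unfolding is_maya_def by (metis lt_ex min.strict_boundedE)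

lemma count_above_strict_antimono:
  assumes "is_maya M" "y \<in> M" "x < y"
  shows "count_above M y < count_above M x"
  unfolding count_above_def
  by (rule psubset_card_mono[OF maya_finite_above[OF assms(1)]]) (use assms in auto)

lemma count_above_antimono: "is_maya M \<Longrightarrow> x \<le> y \<Longrightarrow> count_above M y \<le> count_above M x"
  unfolding count_above_def by (rule card_mono[OF maya_finite_above]) auto

lemma count_above_inj:
  assumes "is_maya M" "x \<in> M" "y \<in> M" "count_above M x = count_above M y"
  shows "x = y"
  using count_above_strict_antimono[OF assms(1) assms(2), of y]
    count_above_strict_antimono[OF assms(1) assms(3), of x] assms(4)
  by (cases x y rule: linorder_cases) auto

lemma maya_seq_mem_count:
  assumes M: "is_maya M"
  shows "maya_seq M i \<in> M \<and> count_above M (maya_seq M i) = i"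
proof (induction i)
  case 0
  have "M \<noteq> {}" "bdd_above M"
    using maya_ex_less[OF M] maya_bdd_above[OF M, of "\<lambda>_. True"] by auto
  then have "Sup M \<in> M" "{y \<in> M. Sup M < y} = {}"
    using Sup_int_mem cSup_upper by force+
  then show ?case
    by (simp only: maya_seq.simps count_above_def card.empty)
next
  case (Suc i)
  let ?s = "maya_seq M i"
  let ?S = "{x \<in> M. x < ?s}"
  have bdd: "bdd_above ?S"
    by (rule maya_bdd_above[OF M])
  have S: "Sup ?S \<in> ?S"
    using maya_ex_less[OF M, of ?s] bdd by (intro Sup_int_mem) auto
  have "y \<le> Sup ?S" if "y \<in> M" "y < ?s" for y
    using cSup_upper[OF _ bdd] that by simp
  then have "{y \<in> M. Sup ?S < y} = insert ?s {y \<in> M. ?s < y}"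
    using S Suc.IH by force
  then have "count_above M (Sup ?S) = Suc i"
    using Suc.IH maya_finite_above[OF M, of ?s] by (simp add: count_above_def)
  then show ?case
    using S by simp
qed

lemma maya_seq_eqI:
  "is_maya M \<Longrightarrow> x \<in> M \<Longrightarrow> count_above M x = i \<Longrightarrow> maya_seq M i = x"
  using maya_seq_mem_count[of M i] count_above_inj[of M "maya_seq M i" x] by auto

lemma maya_seq_Suc_less:
  assumes M: "is_maya M" shows "maya_seq M (Suc i) < maya_seq M i"
proof (rule ccontr)
  assume "\<not> maya_seq M (Suc i) < maya_seq M i"
  then have "count_above M (maya_seq M (Suc i)) \<le> count_above M (maya_seq M i)"
    by (intro count_above_antimono[OF M]) simp
  then show False
    using maya_seq_mem_count[OF M, of i] maya_seq_mem_count[OF M, of "Suc i"] by simp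
qed

lemma maya_seq_plus_index_antimono:
  assumes M: "is_maya M" and "i \<le> j"
  shows "maya_seq M j + int j \<le> maya_seq M i + int i"
  using assms(2)
proof (induction j rule: dec_induct)
  case (step j)
  then show ?case using maya_seq_Suc_less[OF M, of j] by simp
qed simp

lemma part_eq_if_diff_eq:
  assumes "\<And>i. int (part lam i) - int (part lam (Suc i)) = int (part mu i) - int (part mu (Suc i))"
  shows "part lam i = part mu i"
proof -
  define d where "d i = int (part lam i) - int (part mu i)" for i
  have step: "d (Suc j) = d j" for j
    using assms[of j] by (simp add: d_def)
  have "d (i + k) = d i" for k
    by (induction k) (simp_all add: step)
  moreover have "d (i + length lam + length mu) = 0"
    by (simp add: d_def part_def)
  ultimately show ?thesis
    by (metis add.assoc d_def eq_iff_diff_eq_0 of_nat_eq_iff)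
qed

lemma partition_eqI:
  assumes "is_partition lam" "is_partition mu" "\<And>i. part lam i = part mu i"
  shows "lam = mu"
proof -
  have pos: "0 < part nu i" if "is_partition nu" "i < length nu" for nu i
    using that by (auto simp: is_partition_def part_def)
  have "length lam = length mu"
  proof (cases "length lam" "length mu" rule: linorder_cases)
    case less
    then show ?thesis
      using pos[OF assms(2) less] assms(3)[of "length lam"] by (simp add: part_def)
  next
    case greater
    then show ?thesis
      using pos[OF assms(1) greater] assms(3)[of "length mu"] by (simp add: part_def)
  qed
  then show ?thesis
  proof (rule nth_equalityI)
    fix i assume "i < length lam"
    then show "lam ! i = mu ! i"
      using assms(3)[of i] \<open>length lam = length mu\<close> by (simp add: part_def)
  qed
qed

lemma maya_partition_eqI:
  assumes "is_partition lam"
    and "\<And>i. maya_seq M i - maya_seq M (Suc i) = int (part lam i) - int (part lam (Suc i)) + 1"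
  shows "maya_partition M = lam"
  unfolding maya_partition_def
proof (rule the_equality)
  fix mu assume mu: "is_partition mu \<and>
    (\<forall>i. maya_seq M i - maya_seq M (Suc i) = int (part mu i) - int (part mu (Suc i)) + 1)"
  then have "part mu i = part lam i" for i
    using assms(2) by (intro part_eq_if_diff_eq) (metis add_right_cancel)
  then show "mu = lam"
    using mu assms(1) by (intro partition_eqI) auto
qed (use assms in blast)

lemma maya_seq_plus_index_ge:
  assumes M: "is_maya M" and charge: "\<forall>i\<ge>N. maya_seq M i + int i = c"
  shows "c \<le> maya_seq M i + int i"
  using maya_seq_plus_index_antimono[OF M, of i "max i N"] charge by simp

lemma part_maya_partition:
  assumes M: "is_maya M" and charge: "\<forall>i\<ge>N. maya_seq M i + int i = c"
  shows "part (maya_partition M) i = nat (maya_seq M i + int i - c)"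
proof -
  let ?a = "\<lambda>i. nat (maya_seq M i + int i - c)"
  define L where "L = (LEAST i. maya_seq M i + int i = c)"
  have "maya_seq M L + int L = c"
    unfolding L_def by (rule LeastI[of _ N]) (use charge in auto)
  then have tail: "maya_seq M i + int i = c" if "L \<le> i" for i
    using maya_seq_plus_index_antimono[OF M that] maya_seq_plus_index_ge[OF M charge, of i] by simp
  have head: "c < maya_seq M i + int i" if "i < L" for i
    using not_less_Least[OF that[unfolded L_def]] maya_seq_plus_index_ge[OF M charge, of i]
    by (simp add: L_def)
  have part_eq: "part (map ?a [0..<L]) i = ?a i" for i
    using tail[of i] by (auto simp: part_def)
  have "is_partition (map ?a [0..<L])"
    unfolding is_partition_def sorted_wrt_iff_nth_less
    using maya_seq_plus_index_antimono[OF M] head by (auto intro!: nat_mono)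
  moreover have "maya_seq M i - maya_seq M (Suc i)
      = int (part (map ?a [0..<L]) i) - int (part (map ?a [0..<L]) (Suc i)) + 1" for i
    using maya_seq_plus_index_ge[OF M charge, of i] maya_seq_plus_index_ge[OF M charge, of "Suc i"]
    unfolding part_eq by (simp del: maya_seq.simps)
  ultimately have "maya_partition M = map ?a [0..<L]"
    by (rule maya_partition_eqI)
  then show ?thesis
    by (simp add: part_eq)
qed

lemma is_maya_insert:
  assumes "is_maya M" shows "is_maya (insert x M)"
proof -
  obtain a b where "\<forall>k<a. k \<in> M" "\<forall>k\<in>M. k < b"
    using assms unfolding is_maya_def by blast
  then show ?thesis
    unfolding is_maya_def by (intro conjI exI[of _ a] exI[of _ "max b (x + 1)"]) auto
qed

lemma maya_seq_insert:
  assumes M: "is_maya M" and x: "x \<notin> M"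
  shows "i < count_above M x \<Longrightarrow> maya_seq (insert x M) i = maya_seq M i"
    and "maya_seq (insert x M) (count_above M x) = x"
    and "count_above M x \<le> i \<Longrightarrow> maya_seq (insert x M) (Suc i) = maya_seq M i"
proof -
  let ?p = "count_above M x"
  have M': "is_maya (insert x M)"
    by (rule is_maya_insert[OF M])
  have s: "maya_seq M i \<in> M" "count_above M (maya_seq M i) = i" for i
    using maya_seq_mem_count[OF M] by auto
  have above: "count_above (insert x M) y = count_above M y" if "x < y" for y
    unfolding count_above_def using that by (intro arg_cong[where f = card]) auto
  have below: "count_above (insert x M) y = Suc (count_above M y)" if "y < x" for y
  proof -
    have "{z \<in> insert x M. y < z} = insert x {z \<in> M. y < z}"
      using that by auto
    then show ?thesis
      unfolding count_above_def using maya_finite_above[OF M, of y] x by simp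
  qed
  have "count_above (insert x M) x = ?p"
    unfolding count_above_def by (intro arg_cong[where f = card]) auto
  then show "maya_seq (insert x M) ?p = x"
    by (intro maya_seq_eqI[OF M']) auto
  have "x < maya_seq M i" if "i < ?p" for i
    using count_above_antimono[OF M, of "maya_seq M i" x] s[of i] x that by fastforce
  then show "i < ?p \<Longrightarrow> maya_seq (insert x M) i = maya_seq M i"
    by (intro maya_seq_eqI[OF M']) (auto simp: above s)
  have "maya_seq M i < x" if "?p \<le> i" for i
    using count_above_strict_antimono[OF M s(1)[of i], of x] s[of i] x that
    by (cases "maya_seq M i" x rule: linorder_cases) auto
  then show "?p \<le> i \<Longrightarrow> maya_seq (insert x M) (Suc i) = maya_seq M i"
    by (intro maya_seq_eqI[OF M']) (auto simp: below s)
qed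

lemma maya_seq_insert_list:
  assumes M: "is_maya M" and x: "x \<notin> M" and p: "count_above M x \<le> N"
  shows "map (maya_seq (insert x M)) [0..<Suc N]
    = map (maya_seq M) [0..<count_above M x] @ x # map (maya_seq M) [count_above M x..<N]"
    (is "_ = ?xs")
proof (rule nth_equalityI)
  show "length (map (maya_seq (insert x M)) [0..<Suc N]) = length ?xs"
    using p by simp
  fix j assume "j < length (map (maya_seq (insert x M)) [0..<Suc N])"
  then have j: "j < Suc N" by simp
  consider "j < count_above M x" | "j = count_above M x" | "count_above M x < j"
    by linarith
  then show "map (maya_seq (insert x M)) [0..<Suc N] ! j = ?xs ! j"
  proof cases
    case 1
    then show ?thesis
      using j maya_seq_insert(1)[OF M x 1] by (simp add: nth_append del: upt_Suc)
  next
    case 2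
    then show ?thesis
      using j maya_seq_insert(2)[OF M x] by (simp add: nth_append del: upt_Suc)
  next
    case 3
    then obtain j' where j': "j = Suc j'" "count_above M x \<le> j'"
      by (cases j) auto
    then show ?thesis
      using j maya_seq_insert(3)[OF M x j'(2)] by (simp add: nth_append nth_Cons' del: upt_Suc)
  qed
qed

lemma maya_translate:
  assumes M: "is_maya M"
  shows "is_maya ((\<lambda>k. k + d) ` M)" and "maya_seq ((\<lambda>k. k + d) ` M) i = maya_seq M i + d"
proof -
  let ?M = "(\<lambda>k. k + d) ` M"
  obtain a b where ab: "\<forall>k<a. k \<in> M" "\<forall>k\<in>M. k < b"
    using M unfolding is_maya_def by blast
  have "k \<in> ?M" if "k < a + d" for k
    using ab that by (intro image_eqI[of _ _ "k - d"]) auto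
  moreover have "\<forall>k\<in>?M. k < b + d"
    using ab by auto
  ultimately show M': "is_maya ?M"
    unfolding is_maya_def by blast
  have "{z \<in> ?M. maya_seq M i + d < z} = (\<lambda>k. k + d) ` {z \<in> M. maya_seq M i < z}"
    by auto
  then have "count_above ?M (maya_seq M i + d) = count_above M (maya_seq M i)"
    unfolding count_above_def by (simp add: card_image)
  then show "maya_seq ?M i = maya_seq M i + d"
    using maya_seq_mem_count[OF M, of i] by (intro maya_seq_eqI[OF M']) auto
qed

lemma maya_partition_translate:
  assumes "is_maya M" shows "maya_partition ((\<lambda>k. k + d) ` M) = maya_partition M"
  unfolding maya_partition_def maya_translate(2)[OF assms] by simp

lemma maya_seq_plus_index_eventually:
  assumes M: "is_maya M" and a: "\<forall>k<a. k \<in> M"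
  shows "\<forall>i\<ge>count_above M (a - 1). maya_seq M i + int i = a - 1 + int (count_above M (a - 1))"
proof (intro allI impI)
  fix i assume i: "count_above M (a - 1) \<le> i"
  define j where "j = i - count_above M (a - 1)"
  have "{z \<in> M. a - 1 - int j < z} = {z \<in> M. a - 1 < z} \<union> {a - 1 - int j<..a - 1}"
    using a by auto
  moreover have "card ({z \<in> M. a - 1 < z} \<union> {a - 1 - int j<..a - 1}) = count_above M (a - 1) + j"
    by (subst card_Un_disjoint) (auto simp: count_above_def maya_finite_above[OF M])
  ultimately have "count_above M (a - 1 - int j) = count_above M (a - 1) + j"
    by (simp add: count_above_def)
  then have "maya_seq M i = a - 1 - int j"
    using a i by (intro maya_seq_eqI[OF M]) (auto simp: j_def)
  then show "maya_seq M i + int i = a - 1 + int (count_above M (a - 1))"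
    using i by (simp add: j_def)
qed

lemma schur_maya_partition:
  assumes M: "is_maya M" and charge: "\<forall>i\<ge>N0. maya_seq M i + int i = c"
    and N: "length (maya_partition M) \<le> N"
  shows "schur (maya_partition M) = jt_det (map (\<lambda>i. maya_seq M i - c) [0..<N])"
proof -
  have "int (part (maya_partition M) i) - int i = maya_seq M i - c" for i
    using part_maya_partition[OF M charge] maya_seq_plus_index_ge[OF M charge, of i] by simp
  then show ?thesis
    using schur_eq_jt_det[OF N] by simp
qed

lemma vertexX_schur_maya_insert:
  assumes M: "is_maya M" and x: "x \<notin> M" and charge: "\<forall>i\<ge>N0. maya_seq M i + int i = c"
  shows "\<exists>s\<in>{1, -1::complex}. vertexX (x - c - 1) (schur (maya_partition M))
    = (\<lambda>t. s * schur (maya_partition (insert x M)) t)"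
proof -
  let ?M' = "insert x M"
  let ?p = "count_above M x"
  let ?g = "\<lambda>y. y - (c + 1)"
  define N where "N = length (maya_partition M) + length (maya_partition ?M') + ?p"
  have M': "is_maya ?M'"
    by (rule is_maya_insert[OF M])
  have charge': "\<forall>i\<ge>Suc (max N0 ?p). maya_seq ?M' i + int i = c + 1"
  proof (intro allI impI)
    fix i assume "Suc (max N0 ?p) \<le> i"
    then obtain i' where "i = Suc i'" "N0 \<le> i'" "?p \<le> i'"
      by (cases i) auto
    then show "maya_seq ?M' i + int i = c + 1"
      using maya_seq_insert(3)[OF M x] charge by simp
  qed
  have rows: "map (\<lambda>i. maya_seq ?M' i - (c + 1)) [0..<Suc N]
      = map (\<lambda>i. ?g (maya_seq M i)) [0..<?p] @ ?g x # map (\<lambda>i. ?g (maya_seq M i)) [?p..<N]"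
  proof -
    have "?p \<le> N" by (simp add: N_def)
    from arg_cong[OF maya_seq_insert_list[OF M x this], of "map ?g"] show ?thesis
      by (simp only: map_map map_append list.map comp_def)
  qed
  let ?A = "map (\<lambda>i. ?g (maya_seq M i)) [0..<?p]"
  let ?B = "map (\<lambda>i. ?g (maya_seq M i)) [?p..<N]"
  have "vertexX (x - c - 1) (schur (maya_partition M))
      = jt_det ((x - c - 1) # map (\<lambda>y. y - 1) (map (\<lambda>i. maya_seq M i - c) [0..<N]))"
    by (subst schur_maya_partition[OF M charge, of N]) (simp_all add: N_def vertexX_jt_det)
  also have "(x - c - 1) # map (\<lambda>y. y - 1) (map (\<lambda>i. maya_seq M i - c) [0..<N]) = [] @ ?g x # ?A @ ?B"
    using upt_add_eq_append[of 0 ?p "N - ?p"] by (simp add: N_def algebra_simps)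
  finally have "vertexX (x - c - 1) (schur (maya_partition M)) t = (-1) ^ ?p * jt_det (?A @ ?g x # ?B) t"
    for t
    using jt_det_move[of "[]" "?g x" ?A ?B t] by simp
  then have "vertexX (x - c - 1) (schur (maya_partition M)) t
      = (-1) ^ ?p * jt_det (map (\<lambda>i. maya_seq ?M' i - (c + 1)) [0..<Suc N]) t" for t
    unfolding rows .
  also have "jt_det (map (\<lambda>i. maya_seq ?M' i - (c + 1)) [0..<Suc N]) = schur (maya_partition ?M')"
    by (rule schur_maya_partition[OF M' charge', symmetric]) (simp add: N_def)
  finally have "vertexX (x - c - 1) (schur (maya_partition M))
      = (\<lambda>t. (-1) ^ ?p * schur (maya_partition ?M') t)" ..
  moreover have "(-1) ^ ?p \<in> {1, -1::complex}"
    by (cases "even ?p") auto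
  ultimately show ?thesis
    by blast
qed

section \<open>The diagrams M(m,n)\<close>

lemma mem_Mmn_iff: "y \<in> Mmn m n \<longleftrightarrow>
   (y mod 3 = 0 \<and> y div 3 < m) \<or> (y mod 3 = 1 \<and> y div 3 < n) \<or> (y mod 3 = 2 \<and> y div 3 < 0)"
proof
  assume "y \<in> Mmn m n"
  then show "(y mod 3 = 0 \<and> y div 3 < m) \<or> (y mod 3 = 1 \<and> y div 3 < n) \<or> (y mod 3 = 2 \<and> y div 3 < 0)"
    unfolding Mmn_def Dl_def by auto
next
  have y: "y = 3 * (y div 3) + y mod 3" by simp
  assume "(y mod 3 = 0 \<and> y div 3 < m) \<or> (y mod 3 = 1 \<and> y div 3 < n) \<or> (y mod 3 = 2 \<and> y div 3 < 0)"
  then show "y \<in> Mmn m n"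
  proof (elim disjE conjE)
    assume "y mod 3 = 0" "y div 3 < m"
    then show ?thesis unfolding Mmn_def Dl_def using y by (intro UnI1 image_eqI[of _ _ "y div 3"]) auto
  next
    assume "y mod 3 = 1" "y div 3 < n"
    then show ?thesis unfolding Mmn_def Dl_def using y by (intro UnI1 UnI2 image_eqI[of _ _ "y div 3"]) auto
  next
    assume "y mod 3 = 2" "y div 3 < 0"
    then show ?thesis unfolding Mmn_def Dl_def using y by (intro UnI2 image_eqI[of _ _ "y div 3"]) auto
  qed
qed

lemma Mmn_contains_below: "k < 3 * min m (min n 0) \<Longrightarrow> k \<in> Mmn m n"
  unfolding mem_Mmn_iff by presburger

lemma is_maya_Mmn: "is_maya (Mmn m n)"
  unfolding is_maya_def
proof (intro conjI)
  show "\<exists>a. \<forall>k<a. k \<in> Mmn m n"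
    using Mmn_contains_below by blast
  have "k < 3 * max m (max n 0) + 3" if "k \<in> Mmn m n" for k
    using that unfolding mem_Mmn_iff by presburger
  then show "\<exists>b. \<forall>k\<in>Mmn m n. k < b"
    by blast
qed

lemma count_above_Mmn:
  fixes m n :: int
  defines "\<mu> \<equiv> min m (min n 0)"
  shows "int (count_above (Mmn m n) (3 * \<mu> - 1)) = m + n - 3 * \<mu>"
proof -
  have above: "{y \<in> Mmn m n. 3 * \<mu> - 1 < y} =
     ((\<lambda>k. 3 * k) ` {\<mu>..<m} \<union> (\<lambda>k. 3 * k + 1) ` {\<mu>..<n}) \<union> (\<lambda>k. 3 * k + 2) ` {\<mu>..<0}"
    unfolding Mmn_def Dl_def by auto
  have inj: "inj_on (\<lambda>k::int. 3 * k + r) A" for r A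
    by (auto intro: inj_onI)
  have "(\<lambda>k. 3 * k) ` {\<mu>..<m} \<inter> (\<lambda>k. 3 * k + 1) ` {\<mu>..<n} = {}"
    by auto presburger
  moreover have "((\<lambda>k. 3 * k) ` {\<mu>..<m} \<union> (\<lambda>k. 3 * k + 1) ` {\<mu>..<n})
      \<inter> (\<lambda>k. 3 * k + 2) ` {\<mu>..<0} = {}"
    by auto presburger+
  ultimately have "count_above (Mmn m n) (3 * \<mu> - 1) = nat (m - \<mu>) + nat (n - \<mu>) + nat (0 - \<mu>)"
    unfolding count_above_def above
    using inj[of 0] inj[of 1] inj[of 2] by (simp add: card_Un_disjoint card_image)
  moreover have "\<mu> \<le> m" "\<mu> \<le> n" "\<mu> \<le> 0"
    by (auto simp: \<mu>_def)
  ultimately show ?thesis by simp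
qed

lemma maya_seq_Mmn_eventually: "\<exists>N. \<forall>i\<ge>N. maya_seq (Mmn m n) i + int i = m + n - 1"
proof -
  let ?a = "3 * min m (min n 0)"
  have "\<forall>i\<ge>count_above (Mmn m n) (?a - 1).
      maya_seq (Mmn m n) i + int i = ?a - 1 + int (count_above (Mmn m n) (?a - 1))"
    using Mmn_contains_below by (intro maya_seq_plus_index_eventually[OF is_maya_Mmn]) blast
  then show ?thesis
    using count_above_Mmn[of m n] by auto
qed

lemma vertexX_schur_lam_mn:
  assumes "x \<notin> Mmn m n"
  shows "\<exists>s\<in>{1, -1::complex}. vertexX (x - m - n) (schur (lam_mn m n))
    = (\<lambda>t. s * schur (maya_partition (insert x (Mmn m n))) t)"
proof -
  obtain N where "\<forall>i\<ge>N. maya_seq (Mmn m n) i + int i = m + n - 1"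
    using maya_seq_Mmn_eventually by blast
  from vertexX_schur_maya_insert[OF is_maya_Mmn assms this]
  show ?thesis
    by (simp add: lam_mn_def algebra_simps)
qed

lemma insert_Mmn_left: "insert (3 * m) (Mmn m n) = Mmn (m + 1) n"
  by (auto simp: mem_Mmn_iff)

lemma insert_Mmn_right: "insert (3 * n + 1) (Mmn m n) = Mmn m (n + 1)"
  by (auto simp: mem_Mmn_iff) presburger+

lemma insert_Mmn_2: "insert 2 (Mmn (m + 1) (n + 1)) = (\<lambda>k. k + 3) ` Mmn m n"
proof -
  have "y \<in> (\<lambda>k. k + 3) ` Mmn m n \<longleftrightarrow> y - 3 \<in> Mmn m n" for y
    by (auto intro: image_eqI[of _ _ "y - 3"])
  then show ?thesis
    by (auto simp: mem_Mmn_iff) presburger+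
qed

lemma vertexX_schur_lam_mn_Suc_left:
  fixes m n :: int
  shows "\<exists>s\<in>{1, -1::complex}. vertexX (2 * m - n) (schur (lam_mn m n))
    = (\<lambda>t. s * schur (lam_mn (m + 1) n) t)"
proof -
  have notin: "3 * m \<notin> Mmn m n" and idx: "3 * m - m - n = 2 * m - n"
    by (simp_all add: mem_Mmn_iff)
  from vertexX_schur_lam_mn[OF notin] show ?thesis
    by (simp only: idx insert_Mmn_left lam_mn_def)
qed

lemma vertexX_schur_lam_mn_Suc_right:
  fixes m n :: int
  shows "\<exists>s\<in>{1, -1::complex}. vertexX (2 * n - m + 1) (schur (lam_mn m n))
    = (\<lambda>t. s * schur (lam_mn m (n + 1)) t)"
proof -
  have notin: "3 * n + 1 \<notin> Mmn m n" and idx: "3 * n + 1 - m - n = 2 * n - m + 1"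
    by (simp_all add: mem_Mmn_iff)
  from vertexX_schur_lam_mn[OF notin] show ?thesis
    by (simp only: idx insert_Mmn_right lam_mn_def)
qed

lemma vertexX_schur_lam_mn_Suc_Suc:
  fixes m n :: int
  shows "\<exists>s\<in>{1, -1::complex}. vertexX (- m - n) (schur (lam_mn (m + 1) (n + 1)))
    = (\<lambda>t. s * schur (lam_mn m n) t)"
proof -
  have notin: "2 \<notin> Mmn (m + 1) (n + 1)" and idx: "2 - (m + 1) - (n + 1) = - m - n"
    by (simp_all add: mem_Mmn_iff)
  from vertexX_schur_lam_mn[OF notin] show ?thesis
    by (simp only: idx insert_Mmn_2 lam_mn_def maya_partition_translate[OF is_maya_Mmn])
qed

theorem lemma5p4:
  fixes m n :: int
  shows "(\<exists>s\<in>{1, -1::complex}. vertexX (2*m - n) (schur (lam_mn m n))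
            = (\<lambda>t. s * schur (lam_mn (m+1) n) t))
       \<and> (\<exists>s\<in>{1, -1::complex}. vertexX (2*n - m) (schur (lam_mn (m+1) n))
            = (\<lambda>t. s * schur (lam_mn (m+1) (n+1)) t))
       \<and> (\<exists>s\<in>{1, -1::complex}. vertexX (-m - n) (schur (lam_mn (m+1) (n+1)))
            = (\<lambda>t. s * schur (lam_mn m n) t))
       \<and> (\<exists>s\<in>{1, -1::complex}. vertexX (2*n - m + 1) (schur (lam_mn m n))
            = (\<lambda>t. s * schur (lam_mn m (n+1)) t))
       \<and> (\<exists>s\<in>{1, -1::complex}. vertexX (2*m - n - 1) (schur (lam_mn m (n+1)))
            = (\<lambda>t. s * schur (lam_mn (m+1) (n+1)) t))
       \<and> (\<exists>s\<in>{1, -1::complex}. vertexX (-m - n) (schur (lam_mn (m+1) (n+1)))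
            = (\<lambda>t. s * schur (lam_mn m n) t))"
proof -
  have idx: "2 * n - (m + 1) + 1 = 2 * n - m" "2 * m - (n + 1) = 2 * m - n - 1"
    by simp_all
  show ?thesis
    using vertexX_schur_lam_mn_Suc_left[where m = m and n = n]
      vertexX_schur_lam_mn_Suc_right[where m = "m + 1" and n = n]
      vertexX_schur_lam_mn_Suc_Suc[where m = m and n = n]
      vertexX_schur_lam_mn_Suc_right[where m = m and n = n]
      vertexX_schur_lam_mn_Suc_left[where m = m and n = "n + 1"]
    unfolding idx by blast
qed

end
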